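(* Let $a,a^{+}$ be boson operators with $aa^{+}-a^{+}a=1$, let $m\in\mathbb{N}$, $r\ge0$, and let $\lambda$ be a nonzero real number. For all integers $l,n\ge0$, \[ (m\,a^{+}a+r)_{l+n,\lambda}=\sum_{j=0}^{l}\sum_{k=0}^{n}W^{(r)}_{m,\lambda}(l,j)\binom{n}{k}m^{j}(a^{+})^{j}(mj-l\lambda)_{n-k,\lambda}\,(m\,a^{+}a+r)_{k,\lambda}\,a^{j}. \]
   Context: For an operator or number $X$ and real $\lambda\neq0$, $(X)_{0,\lambda}=1$ and $(X)_{n,\lambda}=X(X-\lambda)\cdots(X-(n-1)\lambda)$ for $n\ge1$ (scalars mean multiples of the identity); $(x)_k=x(x-1)\cdots(x-k+1)$. For $m\in\mathbb{N}$ and $r\ge0$, the degenerate $r$-Whitney numbers of the second kind $W^{(r)}_{m,\lambda}(n,k)$ are defined by $(mx+r)_{n,\lambda}=\sum_{k=0}^{n}W^{(r)}_{m,\lambda}(n,k)m^{k}(x)_k$ ($n\ge0$). *)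

theory Defs
  imports Complex_Main
begin

fun dfall :: "'a::real_algebra_1 \<Rightarrow> nat \<Rightarrow> real \<Rightarrow> 'a" where
  "dfall X 0 lam = 1"
| "dfall X (Suc n) lam = dfall X n lam * (X - of_real (real n * lam))"

definition ffall :: "real \<Rightarrow> nat \<Rightarrow> real" where
  "ffall x k = (\<Prod>i<k. x - real i)"

text \<open>Degenerate r-Whitney numbers of the second kind, defined (as in the paper) as the
  coefficients in (m x + r)_{n,lambda} = sum_{k=0}^n W(n,k) m^k (x)_k for all x.
  (Uniquely determined when m > 0.)\<close>
definition whitney2 :: "nat \<Rightarrow> real \<Rightarrow> real \<Rightarrow> nat \<Rightarrow> nat \<Rightarrow> real" where
  "whitney2 m r lam n =
     (THE w. (\<forall>x::real. dfall (real m * x + r) n lam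
                 = (\<Sum>k\<le>n. w k * real m ^ k * ffall x k))
             \<and> (\<forall>k>n. w k = 0))"

end

theory Submission
  imports Defs
begin

text \<open>Write \<open>X = m a\<^sup>+a + r\<close>. Splitting off the first \<open>l\<close> factors gives
  \<open>(X)\<^sub>l\<^sub>+\<^sub>n = (X)\<^sub>l (X - l\<lambda>)\<^sub>n\<close>. Since \<open>a\<^sup>+\<^sup>k a\<^sup>k \<cdot> a\<^sup>+a = a\<^sup>+\<^sup>k\<^sup>+\<^sup>1 a\<^sup>k\<^sup>+\<^sup>1 + k a\<^sup>+\<^sup>k a\<^sup>k\<close>,
  the normally ordered monomials \<open>a\<^sup>+\<^sup>k a\<^sup>k\<close> multiply by the number operator exactly as the
  falling factorials \<open>(x)\<^sub>k\<close> multiply by \<open>x\<close>, so \<open>(X)\<^sub>l = \<Sum>\<^sub>j W(l,j) m\<^sup>j a\<^sup>+\<^sup>j a\<^sup>j\<close> with the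
  same coefficients as in the scalar identity defining the Whitney numbers. Moving \<open>a\<^sup>j\<close>
  to the right through \<open>(X - l\<lambda>)\<^sub>n\<close> shifts the scalar part by \<open>mj\<close>, and the degenerate
  binomial theorem for the commuting sum \<open>X + (mj - l\<lambda>)\<close> finishes the expansion.\<close>

lemma dfall_add: "dfall X (l + n) lam = dfall X l lam * dfall (X - of_real (real l * lam)) n lam"
  by (induction n) (simp_all add: algebra_simps mult.assoc)

lemma dfall_intertwine:
  fixes b Y Z :: "'a::real_algebra_1"
  assumes "b * Y = Z * b"
  shows "b * dfall Y n lam = dfall Z n lam * b"
proof (induction n)
  case 0
  then show ?case by simp
next
  case (Suc n)
  have factor: "b * (Y - of_real (real n * lam)) = (Z - of_real (real n * lam)) * b"
    using assms by (simp add: of_real_def right_diff_distrib left_diff_distrib)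
  have "b * dfall Y (Suc n) lam = (b * dfall Y n lam) * (Y - of_real (real n * lam))"
    by (simp add: mult.assoc)
  also have "\<dots> = dfall Z n lam * (b * (Y - of_real (real n * lam)))"
    using Suc by (simp add: mult.assoc)
  finally show ?case
    unfolding factor by (simp add: mult.assoc)
qed

lemma dfall_binomial_factor:
  fixes Y :: "'a::real_algebra_1"
  assumes "k \<le> n"
  shows "dfall Y k lam * (Y + of_real s - of_real (real n * lam))
    = dfall Y (Suc k) lam + (s - real (n - k) * lam) *\<^sub>R dfall Y k lam"
proof -
  have "Y + of_real s - of_real (real n * lam)
      = (Y - of_real (real k * lam)) + (s - real (n - k) * lam) *\<^sub>R 1"
    using assms by (simp add: of_real_def of_nat_diff algebra_simps)
  then show ?thesis by (simp only: dfall.simps distrib_left mult_scaleR_right mult.right_neutral)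
qed

lemma dfall_binomial:
  fixes Y :: "'a::real_algebra_1"
  shows "dfall (Y + of_real s) n lam
    = (\<Sum>k\<le>n. (real (n choose k) * dfall s (n - k) lam) *\<^sub>R dfall Y k lam)"
proof (induction n)
  case 0
  then show ?case by simp
next
  case (Suc n)
  define A where "A k = dfall Y k lam" for k
  define D where "D k = dfall s k lam" for k
  have D_Suc: "D (Suc n - k) = D (n - k) * (s - real (n - k) * lam)" if "k \<le> n" for k
    using that by (simp add: D_def Suc_diff_le)
  have "dfall (Y + of_real s) (Suc n) lam
      = (\<Sum>k\<le>n. (real (n choose k) * D (n - k)) *\<^sub>R (A k * (Y + of_real s - of_real (real n * lam))))"
    using Suc by (simp add: A_def D_def sum_distrib_right)
  also have "\<dots> = (\<Sum>k\<le>n. (real (n choose k) * D (n - k)) *\<^sub>R A (Suc k))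
      + (\<Sum>k\<le>n. (real (n choose k) * D (Suc n - k)) *\<^sub>R A k)"
    unfolding sum.distrib[symmetric]
  proof (intro sum.cong refl)
    fix k assume "k \<in> {..n}"
    then have k: "k \<le> n" by simp
    show "(real (n choose k) * D (n - k)) *\<^sub>R (A k * (Y + of_real s - of_real (real n * lam)))
        = (real (n choose k) * D (n - k)) *\<^sub>R A (Suc k) + (real (n choose k) * D (Suc n - k)) *\<^sub>R A k"
      unfolding A_def D_Suc[OF k] dfall_binomial_factor[OF k] by (simp add: scaleR_add_right)
  qed
  also have "(\<Sum>k\<le>n. (real (n choose k) * D (Suc n - k)) *\<^sub>R A k)
      = (\<Sum>k\<le>Suc n. (real (n choose k) * D (Suc n - k)) *\<^sub>R A k)"
    by simp
  also have "\<dots> = (real (n choose 0) * D (Suc n)) *\<^sub>R A 0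
        + (\<Sum>k\<le>n. (real (n choose Suc k) * D (n - k)) *\<^sub>R A (Suc k))"
    by (simp only: sum.atMost_Suc_shift) simp
  also have "(\<Sum>k\<le>n. (real (n choose k) * D (n - k)) *\<^sub>R A (Suc k)) + \<dots>
      = (\<Sum>k\<le>Suc n. (real (Suc n choose k) * D (Suc n - k)) *\<^sub>R A k)"
    by (simp only: sum.atMost_Suc_shift) (simp add: sum.distrib[symmetric] scaleR_add_left distrib_right)
  finally show ?case by (simp add: A_def D_def)
qed

lemma annihilator_pow_creation:
  fixes a ap :: "'a::real_algebra_1"
  assumes boson: "a * ap - ap * a = 1"
  shows "a ^ Suc k * ap = ap * a ^ Suc k + real (Suc k) *\<^sub>R a ^ k"
proof (induction k)
  case 0
  then show ?case using boson by (simp add: algebra_simps)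
next
  case (Suc k)
  have "a ^ Suc (Suc k) * ap = a * (ap * a ^ Suc k + real (Suc k) *\<^sub>R a ^ k)"
    using Suc by (simp add: mult.assoc)
  also have "\<dots> = (ap * a + 1) * a ^ Suc k + real (Suc k) *\<^sub>R a ^ Suc k"
    using boson by (simp add: distrib_left mult.assoc algebra_simps flip: mult.assoc)
  also have "\<dots> = ap * a ^ Suc (Suc k) + real (Suc (Suc k)) *\<^sub>R a ^ Suc k"
    by (simp only: distrib_right mult.assoc power_Suc mult_1_left of_nat_Suc[of "Suc k"]
        scaleR_add_left scaleR_one add.assoc add.commute[of "a * a ^ k"])
  finally show ?case .
qed

lemma normal_monomial_mult_number:
  fixes a ap :: "'a::real_algebra_1"
  assumes boson: "a * ap - ap * a = 1"
  shows "(ap ^ k * a ^ k) * (ap * a) = ap ^ Suc k * a ^ Suc k + real k *\<^sub>R (ap ^ k * a ^ k)"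
proof (cases k)
  case 0
  then show ?thesis by simp
next
  case (Suc k')
  have "(ap ^ k * a ^ k) * (ap * a) = ap ^ k * (a ^ Suc k' * ap) * a"
    using Suc by (simp add: mult.assoc)
  also have "\<dots> = ap ^ k * (ap * a ^ Suc k' + real (Suc k') *\<^sub>R a ^ k') * a"
    using annihilator_pow_creation[OF boson] by simp
  also have "\<dots> = (ap ^ k * ap) * (a ^ k * a) + real k *\<^sub>R (ap ^ k * (a ^ k' * a))"
    using Suc by (simp add: distrib_left distrib_right mult.assoc)
  finally show ?thesis
    using Suc by (simp only: power_Suc2)
qed

lemma annihilator_pow_shift_number:
  fixes a ap :: "'a::real_algebra_1"
  assumes boson: "a * ap - ap * a = 1"
  shows "a ^ j * (of_real m * ap * a + of_real s)
    = (of_real m * ap * a + of_real (s + m * real j)) * a ^ j"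
proof (induction j arbitrary: s)
  case 0
  then show ?case by simp
next
  case (Suc j)
  have annihilator_mult_number: "a * (of_real m * ap * a + of_real s) = (of_real m * ap * a + of_real (s + m)) * a" for s
  proof -
    have "a * (of_real m * ap * a + of_real s) = m *\<^sub>R ((a * ap) * a) + s *\<^sub>R a"
      by (simp add: of_real_def distrib_left mult.assoc)
    also have "\<dots> = (of_real m * ap * a + of_real (s + m)) * a"
      using boson by (simp add: of_real_def distrib_right mult.assoc algebra_simps)
    finally show ?thesis .
  qed
  have "a ^ Suc j * (of_real m * ap * a + of_real s) = a ^ j * (a * (of_real m * ap * a + of_real s))"
    by (simp add: mult.assoc power_Suc2 del: power_Suc)
  also have "\<dots> = a ^ j * (of_real m * ap * a + of_real (s + m)) * a"
    unfolding annihilator_mult_number by (simp add: mult.assoc)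
  also have "\<dots> = (of_real m * ap * a + of_real (s + m * real (Suc j))) * a ^ Suc j"
    using Suc[of "s + m"] by (simp add: mult.assoc power_Suc2 algebra_simps del: power_Suc)
  finally show ?case .
qed

lemma annihilator_pow_dfall_number:
  fixes a ap :: "'a::real_algebra_1"
  assumes boson: "a * ap - ap * a = 1"
  shows "a ^ j * dfall (of_real m * ap * a + of_real s) n lam
    = dfall (of_real m * ap * a + of_real (s + m * real j)) n lam * a ^ j"
  by (rule dfall_intertwine) (rule annihilator_pow_shift_number[OF boson])

text \<open>The recurrence \<open>W(n+1,k) = W(n,k-1) + (mk + r - n\<lambda>) W(n,k)\<close>, which determines the
  coefficients of \<^const>\<open>whitney2\<close> without the description operator.\<close>

fun whitney2_rec :: "nat \<Rightarrow> real \<Rightarrow> real \<Rightarrow> nat \<Rightarrow> nat \<Rightarrow> real" where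
  "whitney2_rec m r lam 0 k = (if k = 0 then 1 else 0)"
| "whitney2_rec m r lam (Suc n) k = (case k of 0 \<Rightarrow> 0 | Suc i \<Rightarrow> whitney2_rec m r lam n i)
      + (real m * real k + r - real n * lam) * whitney2_rec m r lam n k"

lemma whitney2_rec_eq_0: "n < k \<Longrightarrow> whitney2_rec m r lam n k = 0"
  by (induction n arbitrary: k) (auto split: nat.splits)

text \<open>Any sequence \<open>P\<close> with \<open>P\<^sub>k N = P\<^sub>k\<^sub>+\<^sub>1 + k P\<^sub>k\<close> behaves like the falling factorial basis
  under multiplication by \<open>N\<close>; this covers both \<open>(x)\<^sub>k\<close> and \<open>a\<^sup>+\<^sup>k a\<^sup>k\<close>.\<close>

lemma dfall_expand_falling_basis:
  fixes N :: "'a::real_algebra_1" and P :: "nat \<Rightarrow> 'a"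
  assumes P0: "P 0 = 1" and PS: "\<And>k. P k * N = P (Suc k) + real k *\<^sub>R P k"
  shows "dfall (of_real (real m) * N + of_real r) l lam
    = (\<Sum>j\<le>l. (whitney2_rec m r lam l j * real m ^ j) *\<^sub>R P j)"
proof (induction l)
  case 0
  then show ?case using P0 by simp
next
  case (Suc l)
  let ?W = "whitney2_rec m r lam l"
  have "dfall (of_real (real m) * N + of_real r) (Suc l) lam
      = (\<Sum>j\<le>l. (?W j * real m ^ j) *\<^sub>R P j) * (real m *\<^sub>R N + (r - real l * lam) *\<^sub>R 1)"
    using Suc by (simp add: of_real_def scaleR_diff_left add_diff_eq)
  also have "\<dots> = (\<Sum>j\<le>l. (?W j * real m ^ j) *\<^sub>R (real m *\<^sub>R (P j * N) + (r - real l * lam) *\<^sub>R P j))"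
    by (simp add: sum_distrib_right distrib_left scaleR_add_right sum.distrib scaleR_sum_right
        mult.commute mult.left_commute)
  also have "\<dots> = (\<Sum>j\<le>l. (?W j * real m ^ Suc j) *\<^sub>R P (Suc j))
     + (\<Sum>j\<le>l. ((real m * real j + r - real l * lam) * ?W j * real m ^ j) *\<^sub>R P j)"
    unfolding PS by (simp add: sum.distrib[symmetric] scaleR_add_right algebra_simps)
  also have "(\<Sum>j\<le>l. (?W j * real m ^ Suc j) *\<^sub>R P (Suc j))
     = (\<Sum>j\<le>Suc l. ((case j of 0 \<Rightarrow> 0 | Suc i \<Rightarrow> ?W i) * real m ^ j) *\<^sub>R P j)"
    by (simp only: sum.atMost_Suc_shift) simp
  also have "(\<Sum>j\<le>l. ((real m * real j + r - real l * lam) * ?W j * real m ^ j) *\<^sub>R P j)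
     = (\<Sum>j\<le>Suc l. ((real m * real j + r - real l * lam) * ?W j * real m ^ j) *\<^sub>R P j)"
    by (simp add: whitney2_rec_eq_0)
  finally show ?case by (simp add: sum.distrib[symmetric] scaleR_add_left distrib_right)
qed

lemma dfall_real_expand_whitney2_rec:
  "dfall (real m * x + r) l lam = (\<Sum>j\<le>l. whitney2_rec m r lam l j * real m ^ j * ffall x j)"
  using dfall_expand_falling_basis[of "ffall x" x m r l lam] by (simp add: ffall_def algebra_simps)

lemma dfall_number_expand_normal_ordered:
  fixes a ap :: "'a::real_algebra_1"
  assumes boson: "a * ap - ap * a = 1"
  shows "dfall (of_real (real m) * ap * a + of_real r) l lam
    = (\<Sum>j\<le>l. (whitney2_rec m r lam l j * real m ^ j) *\<^sub>R (ap ^ j * a ^ j))"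
  unfolding mult.assoc[of "of_real (real m)" ap a]
  by (rule dfall_expand_falling_basis) (simp_all add: normal_monomial_mult_number[OF boson])

lemma ffall_of_nat_eq_0: "k < i \<Longrightarrow> ffall (real k) i = 0"
  unfolding ffall_def by (rule prod_zero) auto

lemma ffall_of_nat_self_neq_0: "ffall (real k) k \<noteq> 0"
  unfolding ffall_def by (simp add: prod_zero_iff)

text \<open>Linear independence of the falling factorials, seen by evaluating at \<open>x = 0, 1, \<dots>, n\<close>.\<close>

lemma ffall_combination_eq_0_imp:
  fixes d :: "nat \<Rightarrow> real"
  assumes vanish: "\<And>x. (\<Sum>k\<le>n. d k * ffall x k) = 0"
  shows "k \<le> n \<Longrightarrow> d k = 0"
proof (induction k rule: less_induct)
  case (less k)
  have "(\<Sum>i\<in>{..n}-{k}. d i * ffall (real k) i) = 0"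
  proof (rule sum.neutral, intro ballI)
    fix i assume "i \<in> {..n}-{k}"
    then show "d i * ffall (real k) i = 0"
      using less ffall_of_nat_eq_0[of k i] by (cases "i < k") auto
  qed
  moreover have "(\<Sum>i\<le>n. d i * ffall (real k) i)
      = d k * ffall (real k) k + (\<Sum>i\<in>{..n}-{k}. d i * ffall (real k) i)"
    using less.prems by (subst sum.remove[of _ k]) auto
  ultimately have "d k * ffall (real k) k = 0"
    using vanish[of "real k"] by simp
  then show ?case using ffall_of_nat_self_neq_0[of k] by simp
qed

lemma whitney2_eq_whitney2_rec:
  assumes "m > 0"
  shows "whitney2 m r lam n = whitney2_rec m r lam n"
  unfolding whitney2_def
proof (rule the_equality)
  show "(\<forall>x. dfall (real m * x + r) n lam
          = (\<Sum>k\<le>n. whitney2_rec m r lam n k * real m ^ k * ffall x k))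
        \<and> (\<forall>k>n. whitney2_rec m r lam n k = 0)"
    using dfall_real_expand_whitney2_rec whitney2_rec_eq_0 by blast
next
  fix w
  assume w: "(\<forall>x. dfall (real m * x + r) n lam = (\<Sum>k\<le>n. w k * real m ^ k * ffall x k))
    \<and> (\<forall>k>n. w k = 0)"
  have "\<And>x. (\<Sum>k\<le>n. ((w k - whitney2_rec m r lam n k) * real m ^ k) * ffall x k) = 0"
    using w dfall_real_expand_whitney2_rec by (simp add: algebra_simps sum_subtractf)
  then have "\<And>k. k \<le> n \<Longrightarrow> (w k - whitney2_rec m r lam n k) * real m ^ k = 0"
    by (rule ffall_combination_eq_0_imp)
  then show "w = whitney2_rec m r lam n"
    using assms w whitney2_rec_eq_0 by (auto intro!: ext) (metis not_le)
qed

theorem mainTheorem8: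
  fixes a ap :: "'a::real_algebra_1"
    and m :: nat and r lam :: real and l n :: nat
  assumes boson: "a * ap - ap * a = 1"
    and m_pos: "m > 0"
    and r_nonneg: "r \<ge> 0"
    and lam_nz: "lam \<noteq> 0"
  shows "dfall (of_real (real m) * ap * a + of_real r) (l + n) lam
    = (\<Sum>j\<le>l. \<Sum>k\<le>n.
         of_real (whitney2 m r lam l j * real (n choose k) * real m ^ j)
         * ap ^ j
         * of_real (dfall (real m * real j - real l * lam) (n - k) lam)
         * dfall (of_real (real m) * ap * a + of_real r) k lam
         * a ^ j)"
proof -
  define X where "X = of_real (real m) * ap * a + of_real r"
  define c where "c j = whitney2_rec m r lam l j * real m ^ j" for j
  define s where "s j = real m * real j - real l * lam" for j
  have shift: "a ^ j * dfall (X - of_real (real l * lam)) n lam = dfall (X + of_real (s j)) n lam * a ^ j"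
    for j
    using annihilator_pow_dfall_number[OF boson, of j "real m" "r - real l * lam" n lam]
    by (simp add: X_def s_def algebra_simps)
  have "dfall X (l + n) lam
      = (\<Sum>j\<le>l. c j *\<^sub>R (ap ^ j * (a ^ j * dfall (X - of_real (real l * lam)) n lam)))"
    unfolding dfall_add X_def c_def dfall_number_expand_normal_ordered[OF boson]
    by (simp add: sum_distrib_right mult.assoc)
  also have "\<dots> = (\<Sum>j\<le>l. \<Sum>k\<le>n. (c j * (real (n choose k) * dfall (s j) (n - k) lam))
      *\<^sub>R (ap ^ j * (dfall X k lam * a ^ j)))"
    unfolding shift dfall_binomial
    by (simp add: sum_distrib_left sum_distrib_right scaleR_sum_right mult.assoc)
  finally show ?thesis
    unfolding X_def whitney2_eq_whitney2_rec[OF m_pos] c_def s_def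
    by (simp add: of_real_def mult_ac)
qed

end
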